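(* All $s$-derangement polynomials are $\gamma$-nonnegative: for every sequence of positive integers $s=(s_1,\ldots,s_n)$ there are nonnegative reals $\gamma_0,\ldots,\gamma_{\lfloor (n+1)/2\rfloor}$ with \[ d_n^s(z)=\sum_{i=0}^{\lfloor (n+1)/2\rfloor}\gamma_i z^i(1+z)^{n+1-2i}. \]
   Context: $P_n^s=\{x\in\mathbb{R}^n:0\le x_1/s_1\le\cdots\le x_n/s_n\le1\}$ and $d_n^s(z)=\ell^\ast(P_n^s;z)$, where for a lattice $d$-simplex $\Delta=\mathrm{conv}(v^{(0)},\ldots,v^{(d)})\subset\mathbb{R}^n$, $\ell^\ast(\Delta;z)=\sum_{x\in\Pi^\circ_\Delta\cap\mathbb{Z}^{n+1}}z^{x_{n+1}}$, $\Pi^\circ_\Delta=\{\sum_i\lambda_i(v^{(i)},1):0<\lambda_i<1\}$. A polynomial is $\gamma$-nonnegative with respect to degree $d$ if it can be written as $\sum_{i=0}^{\lfloor d/2\rfloor}\gamma_iz^i(z+1)^{d-2i}$ with all $\gamma_i\ge0$; here $d=n+1=\dim P_n^s+1$. *)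

theory Defs
  imports "HOL-Analysis.Analysis" "HOL-Computational_Algebra.Polynomial"
begin

text \<open>Points of R^n are represented as functions nat => real, coordinate x_(j+1) being
  stored at index j (j < n); indices >= n are ignored for points of R^n.
  Points of R^(n+1) use index n for the last ("height") coordinate and are 0 beyond.\<close>

definition lift :: "nat \<Rightarrow> (nat \<Rightarrow> real) \<Rightarrow> (nat \<Rightarrow> real)" where
  "lift n v = (\<lambda>j. if j < n then v j else if j = n then 1 else 0)"

definition open_parallelepiped ::
  "nat \<Rightarrow> nat \<Rightarrow> (nat \<Rightarrow> nat \<Rightarrow> real) \<Rightarrow> (nat \<Rightarrow> real) set" where
  "open_parallelepiped n d v =
     {y. \<exists>c::nat \<Rightarrow> real. (\<forall>i\<le>d. 0 < c i \<and> c i < 1) \<and>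
           y = (\<lambda>j. \<Sum>i\<le>d. c i * lift n (v i) j)}"

definition lattice_pts :: "nat \<Rightarrow> (nat \<Rightarrow> real) set" where
  "lattice_pts n = {y. (\<forall>j\<le>n. y j \<in> \<int>) \<and> (\<forall>j>n. y j = 0)}"

definition ell_star :: "nat \<Rightarrow> nat \<Rightarrow> (nat \<Rightarrow> nat \<Rightarrow> real) \<Rightarrow> real poly" where
  "ell_star n d v =
     (\<Sum>y\<in>open_parallelepiped n d v \<inter> lattice_pts n. monom 1 (nat \<lfloor>y n\<rfloor>))"

text \<open>Vertices of P_n^s = {x : 0 <= x_1/s_1 <= ... <= x_n/s_n <= 1}:
  vertex k (k = 0..n) has x_i = 0 for i <= k and x_i = s_i for i > k.\<close>
definition Ps_vertex :: "nat list \<Rightarrow> nat \<Rightarrow> nat \<Rightarrow> real" where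
  "Ps_vertex s k j = (if k \<le> j \<and> j < length s then real (s ! j) else 0)"

definition s_derangement :: "nat list \<Rightarrow> real poly" where
  "s_derangement s = ell_star (length s) (length s) (Ps_vertex s)"

definition gamma_nonneg :: "nat \<Rightarrow> real poly \<Rightarrow> bool" where
  "gamma_nonneg d p \<longleftrightarrow> (\<exists>\<gamma>::nat \<Rightarrow> real. (\<forall>i. 0 \<le> \<gamma> i) \<and>
     p = (\<Sum>i\<le>d div 2. smult (\<gamma> i) ([:0, 1:] ^ i * [:1, 1:] ^ (d - 2 * i))))"

end

theory Submission
  imports Defs
begin

text \<open>Let \<open>t = (s\<^sub>1, \<dots>, s\<^sub>n, 1)\<close>. The lattice points in the open parallelepiped of
  \<open>P\<^sub>n\<^sup>s\<close> are the points \<open>(t\<^sub>1 C\<^sub>1, \<dots>, t\<^sub>n\<^sub>+\<^sub>1 C\<^sub>n\<^sub>+\<^sub>1)\<close> for the chains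
  \<open>0 = C\<^sub>0 < C\<^sub>1 < \<dots> < C\<^sub>n\<^sub>+\<^sub>1\<close> with gaps in \<open>(0, 1)\<close> and \<open>t\<^sub>j C\<^sub>j \<in> \<int>\<close>, and
  the height of such a point is \<open>C\<^sub>n\<^sub>+\<^sub>1\<close>. Let \<open>A\<^sub>k(w)\<close> sum \<open>z\<^bsup>\<lfloor>C\<^sub>k\<rfloor>\<^esup>\<close> over the
  chains of length \<open>k\<close> whose last entry has fractional part \<open>w\<close>, so that
  \<open>d\<^sub>n\<^sup>s = A\<^sub>n\<^sub>+\<^sub>1(0)\<close>. The \<open>A\<^sub>k\<close> satisfy a transfer recursion in which a step from
  fractional part \<open>v\<close> to \<open>w\<close> costs \<open>1\<close> if \<open>v < w\<close> and \<open>z\<close> if \<open>w < v\<close>. The possible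
  fractional parts are symmetric under \<open>w \<mapsto> 1 - w\<close>, and by induction on \<open>k\<close> the
  polynomials \<open>A\<^sub>k(0)\<close> and \<open>A\<^sub>k(u) + z A\<^sub>k(1 - u)\<close> are \<open>\<gamma>\<close>-nonnegative of degree \<open>k\<close>,
  and \<open>A\<^sub>k(u) + A\<^sub>k(1 - u)\<close> and \<open>A\<^sub>k(1/2)\<close> of degree \<open>k - 1\<close> (for \<open>0 < u < 1/2\<close>):
  pairing \<open>v\<close> with \<open>1 - v\<close> in the recursion, every pair is one of these four
  expressions times \<open>1\<close>, \<open>z\<close>, \<open>2\<close> or \<open>1 + z\<close>, which raise the degree accordingly.\<close>

text \<open>A constant rather than \<open>[:0, 1:]\<close>, which the simplifier would dissolve in products.\<close>

definition poly_z :: "real poly" where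
  "poly_z = [:0, 1:]"

lemma one_plus_poly_z: "1 + poly_z = [:1, 1:]"
  by (simp add: poly_z_def one_pCons)

lemma gamma_nonneg_0: "gamma_nonneg d 0"
  unfolding gamma_nonneg_def by (rule exI[of _ "\<lambda>_. 0"]) simp

lemma gamma_nonneg_1: "gamma_nonneg 0 1"
  unfolding gamma_nonneg_def by (rule exI[of _ "\<lambda>_. 1"]) simp

lemma gamma_nonneg_add:
  assumes "gamma_nonneg d p" "gamma_nonneg d q"
  shows "gamma_nonneg d (p + q)"
proof -
  obtain \<gamma> where "\<forall>i. 0 \<le> \<gamma> i"
    and p: "p = (\<Sum>i\<le>d div 2. smult (\<gamma> i) ([:0, 1:] ^ i * [:1, 1:] ^ (d - 2 * i)))"
    using assms(1) unfolding gamma_nonneg_def by blast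
  moreover obtain \<gamma>' where "\<forall>i. 0 \<le> \<gamma>' i"
    and q: "q = (\<Sum>i\<le>d div 2. smult (\<gamma>' i) ([:0, 1:] ^ i * [:1, 1:] ^ (d - 2 * i)))"
    using assms(2) unfolding gamma_nonneg_def by blast
  ultimately show ?thesis
    unfolding gamma_nonneg_def
    by (intro exI[of _ "\<lambda>i. \<gamma> i + \<gamma>' i"]) (simp add: sum.distrib smult_add_left)
qed

lemma gamma_nonneg_sum:
  assumes "\<And>i. i \<in> I \<Longrightarrow> gamma_nonneg d (f i)"
  shows "gamma_nonneg d (\<Sum>i\<in>I. f i)"
  using assms
  by (induction I rule: infinite_finite_induct) (simp_all add: gamma_nonneg_0 gamma_nonneg_add)

lemma gamma_nonneg_mult_1_plus_z:
  assumes "gamma_nonneg d p"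
  shows "gamma_nonneg (Suc d) ((1 + poly_z) * p)"
proof -
  obtain \<gamma> where \<gamma>: "\<forall>i. 0 \<le> \<gamma> i"
    and p: "p = (\<Sum>i\<le>d div 2. smult (\<gamma> i) ([:0, 1:] ^ i * [:1, 1:] ^ (d - 2 * i)))"
    using assms unfolding gamma_nonneg_def by blast
  define \<gamma>' where "\<gamma>' i = (if i \<le> d div 2 then \<gamma> i else 0)" for i
  have "(1 + poly_z) * p = (\<Sum>i\<le>d div 2. smult (\<gamma> i) ([:0, 1:] ^ i * [:1, 1:] ^ (Suc d - 2 * i)))"
    unfolding p one_plus_poly_z sum_distrib_left
  proof (intro sum.cong refl)
    fix i assume "i \<in> {..d div 2}"
    then have "Suc d - 2 * i = Suc (d - 2 * i)" by auto
    then show "[:1, 1:] * smult (\<gamma> i) ([:0, 1:] ^ i * [:1, 1:] ^ (d - 2 * i))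
      = smult (\<gamma> i) ([:0, 1:] ^ i * [:1, 1:] ^ (Suc d - 2 * i))"
      by (simp only: power_Suc mult_smult_right mult.left_commute)
  qed
  also have "\<dots> = (\<Sum>i\<le>Suc d div 2. smult (\<gamma>' i) ([:0, 1:] ^ i * [:1, 1:] ^ (Suc d - 2 * i)))"
    by (rule sum.mono_neutral_cong_left) (auto simp: \<gamma>'_def)
  finally show ?thesis
    unfolding gamma_nonneg_def using \<gamma> by (intro exI[of _ \<gamma>']) (simp add: \<gamma>'_def)
qed

lemma gamma_nonneg_mult_z:
  assumes "gamma_nonneg d p"
  shows "gamma_nonneg (Suc (Suc d)) (poly_z * p)"
proof -
  obtain \<gamma> where \<gamma>: "\<forall>i. 0 \<le> \<gamma> i"
    and p: "p = (\<Sum>i\<le>d div 2. smult (\<gamma> i) ([:0, 1:] ^ i * [:1, 1:] ^ (d - 2 * i)))"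
    using assms unfolding gamma_nonneg_def by blast
  define \<gamma>' where "\<gamma>' i = (if i = 0 then 0 else \<gamma> (i - 1))" for i
  have "poly_z * p = (\<Sum>i\<le>d div 2. smult (\<gamma> i) ([:0, 1:] ^ Suc i * [:1, 1:] ^ (d - 2 * i)))"
    unfolding p poly_z_def sum_distrib_left by (simp add: mult_ac)
  also have "\<dots> = (\<Sum>i\<le>Suc (Suc d) div 2. smult (\<gamma>' i) ([:0, 1:] ^ i * [:1, 1:] ^ (Suc (Suc d) - 2 * i)))"
    by (simp add: sum.atMost_Suc_shift \<gamma>'_def del: sum.atMost_Suc)
  finally show ?thesis
    unfolding gamma_nonneg_def using \<gamma> by (intro exI[of _ \<gamma>']) (simp add: \<gamma>'_def)
qed

definition symmetric_frac_set :: "real set \<Rightarrow> bool" where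
  "symmetric_frac_set G \<longleftrightarrow> finite G \<and> 0 \<in> G \<and> G \<subseteq> {0..<1} \<and> (\<forall>v\<in>G. 0 < v \<longrightarrow> 1 - v \<in> G)"

lemma symmetric_frac_set_reflect:
  assumes "symmetric_frac_set G" "0 < u" "u < 1"
  shows "1 - u \<in> G \<longleftrightarrow> u \<in> G"
proof -
  have reflect: "v \<in> G \<Longrightarrow> 0 < v \<Longrightarrow> 1 - v \<in> G" for v
    using assms(1) by (simp add: symmetric_frac_set_def)
  show ?thesis
    using reflect[of u] reflect[of "1 - u"] assms(2,3) by auto
qed

lemma sum_symmetric_frac_set:
  fixes f :: "real \<Rightarrow> 'a::comm_monoid_add"
  assumes G: "symmetric_frac_set G"
  shows "(\<Sum>v\<in>G. f v) = f 0 + (if 1/2 \<in> G then f (1/2) else 0)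
           + (\<Sum>v\<in>{v\<in>G. 0 < v \<and> v < 1/2}. f v + f (1 - v))"
proof -
  define H where "H = {v\<in>G. 0 < v \<and> v < 1/2}"
  define M where "M = G \<inter> {1/2}"
  have fin: "finite G" and "0 \<in> G" and range: "G \<subseteq> {0..<1}"
    using G by (auto simp: symmetric_frac_set_def)
  have cover: "v \<in> insert 0 (M \<union> (H \<union> (\<lambda>v. 1 - v) ` H))" if "v \<in> G" for v
  proof (cases "v = 0 \<or> v = 1/2 \<or> v \<in> H")
    case False
    then have "0 < 1 - v" "1 - v < 1/2" using that range by (auto simp: H_def)
    then have "1 - v \<in> H" using that symmetric_frac_set_reflect[OF G, of "1 - v"] by (simp add: H_def)
    then show ?thesis by (intro insertI2 UnI2 image_eqI[of _ _ "1 - v"]) auto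
  qed (auto simp: M_def that)
  moreover have "1 - v \<in> G" if "v \<in> H" for v
    using that symmetric_frac_set_reflect[OF G, of v] by (simp add: H_def)
  then have "insert 0 (M \<union> (H \<union> (\<lambda>v. 1 - v) ` H)) \<subseteq> G"
    using \<open>0 \<in> G\<close> by (auto simp: H_def M_def)
  ultimately have "G = insert 0 (M \<union> (H \<union> (\<lambda>v. 1 - v) ` H))"
    by blast
  moreover have "finite H" "finite M" using fin by (simp_all add: H_def M_def)
  moreover have "0 \<notin> M \<union> (H \<union> (\<lambda>v. 1 - v) ` H)" "M \<inter> (H \<union> (\<lambda>v. 1 - v) ` H) = {}"
    "H \<inter> (\<lambda>v. 1 - v) ` H = {}"
    by (auto simp: H_def M_def)
  ultimately have "sum f G = f 0 + (sum f M + (sum f H + sum f ((\<lambda>v. 1 - v) ` H)))"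
    by (simp add: sum.union_disjoint)
  also have "sum f M = (if 1/2 \<in> G then f (1/2) else 0)"
    by (simp add: M_def Int_insert_right)
  also have "sum f ((\<lambda>v. 1 - v) ` H) = (\<Sum>v\<in>H. f (1 - v))"
    by (simp add: sum.reindex inj_on_def)
  finally show ?thesis
    by (simp add: H_def sum.distrib add.assoc)
qed

lemma gamma_nonneg_sum_symmetric:
  assumes G: "symmetric_frac_set G"
    and zero: "gamma_nonneg d (f 0)"
    and half: "1/2 \<in> G \<Longrightarrow> gamma_nonneg d (f (1/2))"
    and pair: "\<And>v. v \<in> G \<Longrightarrow> 0 < v \<Longrightarrow> v < 1/2 \<Longrightarrow> gamma_nonneg d (f v + f (1 - v))"
  shows "gamma_nonneg d (\<Sum>v\<in>G. f v)"
  unfolding sum_symmetric_frac_set[OF G]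
proof (intro gamma_nonneg_add)
  show "gamma_nonneg d (if 1/2 \<in> G then f (1/2) else 0)"
    using half by (simp add: gamma_nonneg_0)
qed (use zero pair in \<open>auto intro: gamma_nonneg_sum\<close>)

definition frac_grid :: "nat \<Rightarrow> real set" where
  "frac_grid t = {w. 0 \<le> w \<and> w < 1 \<and> w * real t \<in> \<int>}"

lemma symmetric_frac_set_frac_grid:
  assumes "0 < t"
  shows "symmetric_frac_set (frac_grid t)"
proof -
  have "frac_grid t \<subseteq> (\<lambda>m. real m / real t) ` {..<t}"
  proof
    fix w assume "w \<in> frac_grid t"
    then obtain m where w: "0 \<le> w" "w < 1" and m: "w * real t = of_int m"
      by (auto simp: frac_grid_def elim: Ints_cases)
    have "0 \<le> m" using m w by (metis of_int_0_le_iff of_nat_0_le_iff zero_le_mult_iff)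
    moreover have "w * real t < real t" using w assms by simp
    then have "m < int t" using m by linarith
    moreover have "w = real (nat m) / real t" using m assms \<open>0 \<le> m\<close> by (simp add: field_simps)
    ultimately show "w \<in> (\<lambda>m. real m / real t) ` {..<t}"
      by (intro image_eqI[of _ _ "nat m"]) auto
  qed
  then have "finite (frac_grid t)"
    by (rule finite_subset) simp
  moreover have "1 - v \<in> frac_grid t" if "v \<in> frac_grid t" "0 < v" for v
  proof -
    have "(1 - v) * real t = real t - v * real t" by (simp add: algebra_simps)
    also have "\<dots> \<in> \<int>" using that by (simp add: frac_grid_def)
    finally show ?thesis using that by (simp add: frac_grid_def)
  qed
  moreover have "0 \<in> frac_grid t" "frac_grid t \<subseteq> {0..<1}"
    by (auto simp: frac_grid_def)
  ultimately show ?thesis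
    by (simp add: symmetric_frac_set_def)
qed

text \<open>The next entry of a chain lies in the open unit interval above the current one, so
  with fractional parts \<open>v\<close> and \<open>w\<close> its integer part grows by one exactly when
  \<open>w < v\<close>, and \<open>w = v\<close> is impossible.\<close>

definition step_weight :: "real \<Rightarrow> real \<Rightarrow> real poly" where
  "step_weight v w = (if v < w then 1 else if w < v then poly_z else 0)"

definition transfer :: "real set \<Rightarrow> real set \<Rightarrow> (real \<Rightarrow> real poly) \<Rightarrow> real \<Rightarrow> real poly" where
  "transfer G G' A w = (if w \<in> G' then \<Sum>v\<in>G. step_weight v w * A v else 0)"

definition gamma_invariant :: "nat \<Rightarrow> (real \<Rightarrow> real poly) \<Rightarrow> bool" where
  "gamma_invariant d A \<longleftrightarrow>
     gamma_nonneg (Suc d) (A 0) \<and>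
     (\<forall>u. 0 < u \<and> u < 1/2 \<longrightarrow> gamma_nonneg (Suc d) (A u + poly_z * A (1 - u))) \<and>
     (\<forall>u. 0 < u \<and> u < 1/2 \<longrightarrow> gamma_nonneg d (A u + A (1 - u))) \<and>
     gamma_nonneg d (A (1/2))"

lemma transfer_pair:
  assumes "symmetric_frac_set G'" "0 < u" "u < 1"
  shows "transfer G G' A u + c * transfer G G' A (1 - u)
    = (if u \<in> G' then \<Sum>v\<in>G. (step_weight v u + c * step_weight v (1 - u)) * A v else 0)"
  using symmetric_frac_set_reflect[OF assms]
  by (simp add: transfer_def sum_distrib_left sum.distrib algebra_simps)

lemma gamma_invariant_transfer_initial:
  assumes G': "symmetric_frac_set G'" and "A 0 = 1"
  shows "gamma_invariant 0 (transfer {0} G' A)"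
proof -
  let ?B = "transfer {0} G' A"
  have pair: "?B u + c * ?B (1 - u) = (if u \<in> G' then 1 + c else 0)" if "0 < u" "u < 1/2" for u c
    using that assms by (simp add: transfer_pair[OF G'] step_weight_def)
  have "gamma_nonneg 1 (?B u + poly_z * ?B (1 - u))" "gamma_nonneg 0 (?B u + 1 * ?B (1 - u))"
    if "0 < u" "u < 1/2" for u
    unfolding pair[OF that]
    using gamma_nonneg_mult_1_plus_z[OF gamma_nonneg_1] gamma_nonneg_add[OF gamma_nonneg_1 gamma_nonneg_1]
    by (simp_all add: gamma_nonneg_0)
  moreover have "?B 0 = 0" "?B (1/2) = (if 1/2 \<in> G' then 1 else 0)"
    using assms by (simp_all add: transfer_def step_weight_def)
  ultimately show ?thesis
    by (simp add: gamma_invariant_def gamma_nonneg_0 gamma_nonneg_1)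
qed

context
  fixes G G' :: "real set" and A :: "real \<Rightarrow> real poly" and d :: nat
  assumes G: "symmetric_frac_set G" and G': "symmetric_frac_set G'"
    and A_0: "gamma_nonneg (Suc d) (A 0)"
    and A_pair_z: "\<And>u. 0 < u \<Longrightarrow> u < 1/2 \<Longrightarrow> gamma_nonneg (Suc d) (A u + poly_z * A (1 - u))"
    and A_pair: "\<And>u. 0 < u \<Longrightarrow> u < 1/2 \<Longrightarrow> gamma_nonneg d (A u + A (1 - u))"
    and A_half: "gamma_nonneg d (A (1/2))"
begin

lemma gamma_nonneg_transfer_0: "gamma_nonneg (Suc (Suc d)) (transfer G G' A 0)"
proof -
  have "gamma_nonneg (Suc (Suc d)) (\<Sum>v\<in>G. step_weight v 0 * A v)"
  proof (rule gamma_nonneg_sum_symmetric[OF G])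
    show "gamma_nonneg (Suc (Suc d)) (step_weight (1/2) 0 * A (1/2))"
      using gamma_nonneg_mult_z[OF A_half] by (simp add: step_weight_def)
    fix v :: real assume v: "0 < v" "v < 1/2"
    then have "step_weight v 0 * A v + step_weight (1 - v) 0 * A (1 - v) = poly_z * (A v + A (1 - v))"
      by (simp add: step_weight_def algebra_simps)
    then show "gamma_nonneg (Suc (Suc d)) (step_weight v 0 * A v + step_weight (1 - v) 0 * A (1 - v))"
      using gamma_nonneg_mult_z[OF A_pair[OF v]] by (simp only:)
  qed (simp add: step_weight_def gamma_nonneg_0)
  then show ?thesis
    by (simp add: transfer_def gamma_nonneg_0)
qed

lemma gamma_nonneg_transfer_pair_z:
  assumes u: "0 < u" "u < 1/2"
  shows "gamma_nonneg (Suc (Suc d)) (transfer G G' A u + poly_z * transfer G G' A (1 - u))"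
proof -
  let ?f = "\<lambda>v. (step_weight v u + poly_z * step_weight v (1 - u)) * A v"
  have "gamma_nonneg (Suc (Suc d)) (\<Sum>v\<in>G. ?f v)"
  proof (rule gamma_nonneg_sum_symmetric[OF G])
    show "gamma_nonneg (Suc (Suc d)) (?f 0)"
      using u gamma_nonneg_mult_1_plus_z[OF A_0] by (simp add: step_weight_def)
    have "?f (1/2) = poly_z * (A (1/2) + A (1/2))"
      using u by (simp add: step_weight_def algebra_simps)
    then show "gamma_nonneg (Suc (Suc d)) (?f (1/2))"
      using gamma_nonneg_mult_z[OF gamma_nonneg_add[OF A_half A_half]] by (simp only:)
    fix v :: real assume v: "0 < v" "v < 1/2"
    consider "v < u" | "v = u" | "u < v" by linarith
    then show "gamma_nonneg (Suc (Suc d)) (?f v + ?f (1 - v))"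
    proof cases
      case 1
      then have "?f v + ?f (1 - v) = (1 + poly_z) * (A v + poly_z * A (1 - v))"
        using u v by (simp add: step_weight_def algebra_simps)
      then show ?thesis using gamma_nonneg_mult_1_plus_z[OF A_pair_z[OF v]] by (simp only:)
    next
      case 2
      then have "?f v + ?f (1 - v) = poly_z * (A v + A (1 - v))"
        using u v by (simp add: step_weight_def algebra_simps)
      then show ?thesis using gamma_nonneg_mult_z[OF A_pair[OF v]] by (simp only:)
    next
      case 3
      then have "?f v + ?f (1 - v) = poly_z * ((A v + A (1 - v)) + (A v + A (1 - v)))"
        using u v by (simp add: step_weight_def algebra_simps)
      then show ?thesis using gamma_nonneg_mult_z[OF gamma_nonneg_add[OF A_pair[OF v] A_pair[OF v]]] by (simp only:)
    qed
  qed
  then show ?thesis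
    using u by (simp add: transfer_pair[OF G'] gamma_nonneg_0)
qed

lemma gamma_nonneg_transfer_pair:
  assumes u: "0 < u" "u < 1/2"
  shows "gamma_nonneg (Suc d) (transfer G G' A u + transfer G G' A (1 - u))"
proof -
  let ?f = "\<lambda>v. (step_weight v u + 1 * step_weight v (1 - u)) * A v"
  have "gamma_nonneg (Suc d) (\<Sum>v\<in>G. ?f v)"
  proof (rule gamma_nonneg_sum_symmetric[OF G])
    have "?f 0 = A 0 + A 0"
      using u by (simp add: step_weight_def algebra_simps)
    then show "gamma_nonneg (Suc d) (?f 0)"
      using gamma_nonneg_add[OF A_0 A_0] by (simp only:)
    have "?f (1/2) = (1 + poly_z) * A (1/2)"
      using u by (simp add: step_weight_def algebra_simps)
    then show "gamma_nonneg (Suc d) (?f (1/2))"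
      using gamma_nonneg_mult_1_plus_z[OF A_half] by (simp only:)
    fix v :: real assume v: "0 < v" "v < 1/2"
    consider "v < u" | "v = u" | "u < v" by linarith
    then show "gamma_nonneg (Suc d) (?f v + ?f (1 - v))"
    proof cases
      case 1
      then have "?f v + ?f (1 - v) = (A v + poly_z * A (1 - v)) + (A v + poly_z * A (1 - v))"
        using u v by (simp add: step_weight_def algebra_simps)
      then show ?thesis using gamma_nonneg_add[OF A_pair_z[OF v] A_pair_z[OF v]] by (simp only:)
    next
      case 2
      then have "?f v + ?f (1 - v) = A v + poly_z * A (1 - v)"
        using u v by (simp add: step_weight_def algebra_simps)
      then show ?thesis using A_pair_z[OF v] by (simp only:)
    next
      case 3
      then have "?f v + ?f (1 - v) = (1 + poly_z) * (A v + A (1 - v))"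
        using u v by (simp add: step_weight_def algebra_simps)
      then show ?thesis using gamma_nonneg_mult_1_plus_z[OF A_pair[OF v]] by (simp only:)
    qed
  qed
  then show ?thesis
    using u transfer_pair[OF G', of u G A 1] by (simp add: gamma_nonneg_0)
qed

lemma gamma_nonneg_transfer_half: "gamma_nonneg (Suc d) (transfer G G' A (1/2))"
proof -
  have "gamma_nonneg (Suc d) (\<Sum>v\<in>G. step_weight v (1/2) * A v)"
  proof (rule gamma_nonneg_sum_symmetric[OF G])
    fix v :: real assume v: "0 < v" "v < 1/2"
    then have "step_weight v (1/2) * A v + step_weight (1 - v) (1/2) * A (1 - v) = A v + poly_z * A (1 - v)"
      by (simp add: step_weight_def)
    then show "gamma_nonneg (Suc d) (step_weight v (1/2) * A v + step_weight (1 - v) (1/2) * A (1 - v))"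
      using A_pair_z[OF v] by (simp only:)
  qed (use A_0 in \<open>simp_all add: step_weight_def gamma_nonneg_0\<close>)
  then show ?thesis
    by (simp add: transfer_def gamma_nonneg_0)
qed

end

lemma gamma_invariant_transfer:
  assumes "symmetric_frac_set G" "symmetric_frac_set G'" "gamma_invariant d A"
  shows "gamma_invariant (Suc d) (transfer G G' A)"
  using assms gamma_nonneg_transfer_0 gamma_nonneg_transfer_pair_z gamma_nonneg_transfer_pair
    gamma_nonneg_transfer_half
  unfolding gamma_invariant_def by simp

lemma frac_in_frac_grid:
  assumes "x * real t \<in> \<int>"
  shows "frac x \<in> frac_grid t"
proof -
  have "frac x * real t = x * real t - of_int \<lfloor>x\<rfloor> * real t"
    by (simp add: frac_def algebra_simps)
  also have "\<dots> \<in> \<int>"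
    using assms by (metis Ints_diff Ints_mult Ints_of_int Ints_of_nat)
  finally show ?thesis
    by (simp add: frac_grid_def frac_lt_1)
qed

lemma frac_eq_in_unit_interval:
  assumes "h < x" "x < h + 1" "frac x = w"
  shows "w \<noteq> frac h" "x = of_int \<lfloor>h\<rfloor> + (if w < frac h then 1 else 0) + w"
proof -
  have x: "x = of_int \<lfloor>x\<rfloor> + w" and h: "h = of_int \<lfloor>h\<rfloor> + frac h"
    using assms(3) by (simp_all add: frac_def)
  have "0 \<le> w" "w < 1" "0 \<le> frac h" "frac h < 1"
    using assms(3) frac_lt_1 by auto
  moreover have "\<lfloor>h\<rfloor> \<le> \<lfloor>x\<rfloor>" "\<lfloor>x\<rfloor> \<le> \<lfloor>h\<rfloor> + 1"
    using floor_mono[of h x] floor_mono[of x "h + 1"] assms(1,2) by simp_all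
  then have "\<lfloor>x\<rfloor> = \<lfloor>h\<rfloor> \<or> \<lfloor>x\<rfloor> = \<lfloor>h\<rfloor> + 1"
    by linarith
  ultimately show "w \<noteq> frac h" "x = of_int \<lfloor>h\<rfloor> + (if w < frac h then 1 else 0) + w"
    using assms(1,2) x h by auto
qed

definition next_entries :: "nat \<Rightarrow> real \<Rightarrow> real set" where
  "next_entries t h = {x. x * real t \<in> \<int> \<and> h < x \<and> x < h + 1}"

lemma finite_next_entries:
  assumes "0 < t"
  shows "finite (next_entries t h)"
proof -
  have "next_entries t h \<subseteq> (\<lambda>m. of_int m / real t) ` {\<lfloor>h * real t\<rfloor>..\<lceil>(h + 1) * real t\<rceil>}"
  proof
    fix x assume "x \<in> next_entries t h"
    then obtain m where x: "h < x" "x < h + 1" and m: "x * real t = of_int m"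
      by (auto simp: next_entries_def elim: Ints_cases)
    have "h * real t < x * real t" "x * real t < (h + 1) * real t"
      using x assms by simp_all
    then have "m \<in> {\<lfloor>h * real t\<rfloor>..\<lceil>(h + 1) * real t\<rceil>}"
      using m by (simp add: floor_le_iff le_ceiling_iff)
    moreover have "x = of_int m / real t"
      using m assms by (simp add: field_simps)
    ultimately show "x \<in> (\<lambda>m. of_int m / real t) ` {\<lfloor>h * real t\<rfloor>..\<lceil>(h + 1) * real t\<rceil>}"
      by blast
  qed
  then show ?thesis
    by (rule finite_subset) simp
qed

lemma poly_z_mult_monom: "poly_z * monom 1 n = monom 1 (Suc n)"
  by (simp add: poly_z_def monom_Suc)

lemma next_entries_frac_eq:
  "{x\<in>next_entries t h. frac x = w}
     = (if w \<in> frac_grid t \<and> w \<noteq> frac h then {of_int \<lfloor>h\<rfloor> + (if w < frac h then 1 else 0) + w} else {})"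
proof (cases "w \<in> frac_grid t \<and> w \<noteq> frac h")
  case True
  then have w: "0 \<le> w" "w < 1" "w * real t \<in> \<int>" "w \<noteq> frac h"
    by (auto simp: frac_grid_def)
  define x\<^sub>0 where "x\<^sub>0 = of_int \<lfloor>h\<rfloor> + (if w < frac h then 1 else 0) + w"
  have floor_x\<^sub>0: "\<lfloor>x\<^sub>0\<rfloor> = \<lfloor>h\<rfloor> + (if w < frac h then 1 else 0)"
    using w by (simp add: x\<^sub>0_def floor_eq_iff)
  have "frac x\<^sub>0 = w"
    unfolding frac_def[of x\<^sub>0] floor_x\<^sub>0 by (simp add: x\<^sub>0_def)
  moreover have "h < x\<^sub>0 \<and> x\<^sub>0 < h + 1"
  proof -
    have "of_int \<lfloor>h\<rfloor> + frac h = h"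
      by (simp add: frac_def)
    then show ?thesis
      using w frac_lt_1[of h] frac_ge_0[of h] by (cases "w < frac h") (simp_all add: x\<^sub>0_def, linarith+)
  qed
  moreover have "x\<^sub>0 * real t = of_int (\<lfloor>h\<rfloor> + (if w < frac h then 1 else 0)) * real t + w * real t"
    by (simp add: x\<^sub>0_def algebra_simps)
  then have "x\<^sub>0 * real t \<in> \<int>"
    using w by (metis Ints_add Ints_mult Ints_of_int Ints_of_nat)
  ultimately have "x\<^sub>0 \<in> {x\<in>next_entries t h. frac x = w}"
    by (simp add: next_entries_def)
  moreover have "x = x\<^sub>0" if "x \<in> next_entries t h" "frac x = w" for x
    using frac_eq_in_unit_interval[of h x w] that by (simp add: next_entries_def x\<^sub>0_def)
  ultimately have "{x\<in>next_entries t h. frac x = w} = {x\<^sub>0}"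
    by blast
  then show ?thesis
    using True by (simp add: x\<^sub>0_def)
next
  case False
  have "x \<notin> next_entries t h" if "frac x = w" for x
    using False that frac_in_frac_grid[of x t] frac_eq_in_unit_interval(1)[of h x w]
    by (auto simp: next_entries_def)
  with False show ?thesis
    by auto
qed

lemma sum_next_entries_frac:
  assumes "0 < t" "0 \<le> h"
  shows "(\<Sum>x\<in>next_entries t h. if frac x = w then monom 1 (nat \<lfloor>x\<rfloor>) else 0)
       = (if w \<in> frac_grid t then step_weight (frac h) w * monom 1 (nat \<lfloor>h\<rfloor>) else 0)"
proof -
  have weight: "monom 1 (nat \<lfloor>of_int \<lfloor>h\<rfloor> + (if w < frac h then 1 else 0) + w\<rfloor>)
      = step_weight (frac h) w * monom 1 (nat \<lfloor>h\<rfloor>)" if "0 \<le> w" "w < 1" "w \<noteq> frac h"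
  proof -
    have "\<lfloor>of_int \<lfloor>h\<rfloor> + (if w < frac h then 1 else 0) + w\<rfloor> = \<lfloor>h\<rfloor> + (if w < frac h then 1 else 0)"
      using that by (simp add: floor_eq_iff)
    then show ?thesis
      using that assms(2) by (auto simp: step_weight_def poly_z_mult_monom nat_add_distrib)
  qed
  have "(\<Sum>x\<in>next_entries t h. if frac x = w then monom 1 (nat \<lfloor>x\<rfloor>) else 0)
      = (\<Sum>x\<in>{x\<in>next_entries t h. frac x = w}. monom 1 (nat \<lfloor>x\<rfloor>))"
    using finite_next_entries[OF assms(1)] by (simp add: sum.inter_filter)
  also have "\<dots> = (if w \<in> frac_grid t then step_weight (frac h) w * monom 1 (nat \<lfloor>h\<rfloor>) else 0)"
    unfolding next_entries_frac_eq using weight by (auto simp: frac_grid_def step_weight_def)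
  finally show ?thesis .
qed

definition chain_prev :: "nat \<Rightarrow> (nat \<Rightarrow> real) \<Rightarrow> real" where
  "chain_prev j C = (if j = 0 then 0 else C (j - 1))"

text \<open>The chain \<open>C\<^sub>1, \<dots>, C\<^sub>k\<close> of the header is stored as \<open>C 0, \<dots>, C (k - 1)\<close>, with
  \<^const>\<open>chain_prev\<close> supplying the starting point \<open>C\<^sub>0 = 0\<close>.\<close>

definition box_chains :: "(nat \<Rightarrow> nat) \<Rightarrow> nat \<Rightarrow> (nat \<Rightarrow> real) set" where
  "box_chains t k = {C. (\<forall>j<k. C j * real (t j) \<in> \<int> \<and> chain_prev j C < C j \<and> C j < chain_prev j C + 1)
                    \<and> (\<forall>j\<ge>k. C j = 0)}"

definition chain_poly :: "(nat \<Rightarrow> nat) \<Rightarrow> nat \<Rightarrow> real \<Rightarrow> real poly" where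
  "chain_poly t k w =
     (\<Sum>C\<in>box_chains t k. if frac (chain_prev k C) = w then monom 1 (nat \<lfloor>chain_prev k C\<rfloor>) else 0)"

lemma chain_prev_Suc: "chain_prev (Suc k) C = C k"
  by (simp add: chain_prev_def)

lemma box_chains_0: "box_chains t 0 = {\<lambda>_. 0}"
  by (auto simp: box_chains_def)

lemma chain_prev_fun_upd:
  assumes "j \<le> k"
  shows "chain_prev j (C(k := x)) = chain_prev j C"
  using assms by (auto simp: chain_prev_def)

lemma box_chains_Suc:
  "box_chains t (Suc k) = (\<lambda>(C, x). C(k := x)) ` (SIGMA C:box_chains t k. next_entries (t k) (chain_prev k C))"
proof (intro equalityI subsetI)
  fix D assume D: "D \<in> box_chains t (Suc k)"
  have "D(k := 0) \<in> box_chains t k" "D k \<in> next_entries (t k) (chain_prev k (D(k := 0)))"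
    using D chain_prev_fun_upd[of _ k D 0] by (auto simp: box_chains_def next_entries_def)
  then show "D \<in> (\<lambda>(C, x). C(k := x)) ` (SIGMA C:box_chains t k. next_entries (t k) (chain_prev k C))"
    by (intro image_eqI[of _ _ "(D(k := 0), D k)"]) auto
next
  fix D assume "D \<in> (\<lambda>(C, x). C(k := x)) ` (SIGMA C:box_chains t k. next_entries (t k) (chain_prev k C))"
  then obtain C x where D: "D = C(k := x)" and C: "C \<in> box_chains t k"
    and x: "x \<in> next_entries (t k) (chain_prev k C)"
    by auto
  have "j < Suc k \<Longrightarrow> D j * real (t j) \<in> \<int> \<and> chain_prev j D < D j \<and> D j < chain_prev j D + 1" for j
    using C x chain_prev_fun_upd[of j k C x] unfolding D
    by (cases "j = k") (auto simp: box_chains_def next_entries_def)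
  moreover have "j \<ge> Suc k \<Longrightarrow> D j = 0" for j
    using C by (simp add: D box_chains_def)
  ultimately show "D \<in> box_chains t (Suc k)"
    by (simp add: box_chains_def)
qed

lemma inj_on_box_chains_extend:
  "inj_on (\<lambda>(C, x). C(k := x)) (SIGMA C:box_chains t k. next_entries (t k) (chain_prev k C))"
proof (rule inj_onI, clarify)
  fix C x D y
  assume "C \<in> box_chains t k" "D \<in> box_chains t k" and eq: "C(k := x) = D(k := y)"
  then have "C k = D k"
    by (simp add: box_chains_def)
  then show "C = D \<and> x = y"
    using eq by (metis fun_upd_eqD fun_upd_idem_iff fun_upd_upd)
qed

lemma finite_box_chains:
  assumes "\<forall>j. 0 < t j"
  shows "finite (box_chains t k)"
proof (induction k)
  case (Suc k)
  then show ?case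
    unfolding box_chains_Suc using finite_next_entries assms by (intro finite_imageI finite_SigmaI) auto
qed (simp add: box_chains_0)

lemma chain_prev_nonneg:
  assumes "C \<in> box_chains t k"
  shows "0 \<le> chain_prev k C"
proof -
  have "j \<le> k \<Longrightarrow> 0 \<le> chain_prev j C" for j
  proof (induction j)
    case (Suc j)
    then have "chain_prev j C < C j"
      using assms by (simp add: box_chains_def)
    with Suc show ?case
      by (simp add: chain_prev_def)
  qed (simp add: chain_prev_def)
  then show ?thesis
    by simp
qed

lemma frac_chain_prev_Suc:
  assumes "C \<in> box_chains t (Suc k)"
  shows "frac (chain_prev (Suc k) C) \<in> frac_grid (t k)"
  using assms frac_in_frac_grid by (simp add: box_chains_def chain_prev_Suc)

lemma chain_poly_Suc:
  assumes pos: "\<forall>j. 0 < t j" and "finite G"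
    and G: "\<And>C. C \<in> box_chains t k \<Longrightarrow> frac (chain_prev k C) \<in> G"
  shows "chain_poly t (Suc k) = transfer G (frac_grid (t k)) (chain_poly t k)"
proof
  fix w :: real
  let ?term = "\<lambda>x. if frac x = w then monom 1 (nat \<lfloor>x\<rfloor>) else (0 :: real poly)"
  let ?weighted = "\<lambda>C. step_weight (frac (chain_prev k C)) w * monom 1 (nat \<lfloor>chain_prev k C\<rfloor>)"
  have "chain_poly t (Suc k) w = (\<Sum>D\<in>box_chains t (Suc k). ?term (D k))"
    by (simp only: chain_poly_def chain_prev_Suc)
  also have "\<dots> = (\<Sum>(C, x)\<in>(SIGMA C:box_chains t k. next_entries (t k) (chain_prev k C)). ?term x)"
    unfolding box_chains_Suc sum.reindex[OF inj_on_box_chains_extend]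
    by (intro sum.cong) (auto split: prod.splits)
  also have "\<dots> = (\<Sum>C\<in>box_chains t k. \<Sum>x\<in>next_entries (t k) (chain_prev k C). ?term x)"
    using finite_box_chains[OF pos] finite_next_entries pos by (simp add: sum.Sigma)
  also have "\<dots> = (\<Sum>C\<in>box_chains t k. if w \<in> frac_grid (t k) then ?weighted C else 0)"
    using sum_next_entries_frac pos chain_prev_nonneg by (intro sum.cong) auto
  also have "\<dots> = (if w \<in> frac_grid (t k) then \<Sum>C\<in>box_chains t k. ?weighted C else 0)"
    by simp
  also have "(\<Sum>C\<in>box_chains t k. ?weighted C)
      = (\<Sum>C\<in>box_chains t k. \<Sum>v\<in>G. if frac (chain_prev k C) = v then ?weighted C else 0)"
    using \<open>finite G\<close> G by (simp add: sum.delta)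
  also have "\<dots> = (\<Sum>v\<in>G. step_weight v w * chain_poly t k v)"
    unfolding chain_poly_def sum_distrib_left by (subst sum.swap) (auto intro!: sum.cong)
  finally show "chain_poly t (Suc k) w = transfer G (frac_grid (t k)) (chain_poly t k) w"
    by (simp add: transfer_def)
qed

lemma chain_poly_0_0: "chain_poly t 0 0 = 1"
  by (simp add: chain_poly_def box_chains_0 chain_prev_def)

lemma gamma_invariant_chain_poly:
  assumes pos: "\<forall>j. 0 < t j"
  shows "gamma_invariant k (chain_poly t (Suc k))"
proof (induction k)
  case 0
  have "chain_poly t (Suc 0) = transfer {0} (frac_grid (t 0)) (chain_poly t 0)"
    using pos by (intro chain_poly_Suc) (simp_all add: chain_prev_def)
  then show ?case
    using gamma_invariant_transfer_initial symmetric_frac_set_frac_grid pos chain_poly_0_0 by simp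
next
  case (Suc k)
  have "chain_poly t (Suc (Suc k)) = transfer (frac_grid (t k)) (frac_grid (t (Suc k))) (chain_poly t (Suc k))"
    using pos frac_chain_prev_Suc symmetric_frac_set_frac_grid
    by (intro chain_poly_Suc) (simp_all add: symmetric_frac_set_def)
  then show ?case
    using gamma_invariant_transfer symmetric_frac_set_frac_grid pos Suc.IH by simp
qed

text \<open>The height coordinate behaves like one more coordinate with scale \<open>1\<close>.\<close>

definition scale_seq :: "nat list \<Rightarrow> nat \<Rightarrow> nat" where
  "scale_seq s j = (if j < length s then s ! j else 1)"

lemma scale_seq_pos:
  assumes "\<forall>x\<in>set s. 0 < x"
  shows "0 < scale_seq s j"
  using assms by (simp add: scale_seq_def)

lemma parallelepiped_point_Ps_vertex:
  "(\<lambda>j. \<Sum>i\<le>length s. c i * lift (length s) (Ps_vertex s i) j)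
     = (\<lambda>j. real (scale_seq s j) * (if j \<le> length s then \<Sum>i\<le>j. c i else 0))"
proof
  fix j
  have "(\<Sum>i\<le>length s. c i * lift (length s) (Ps_vertex s i) j)
      = (\<Sum>i\<in>{..length s}. if i \<le> j \<and> j \<le> length s then c i * real (scale_seq s j) else 0)"
    by (intro sum.cong) (auto simp: lift_def Ps_vertex_def scale_seq_def)
  also have "\<dots> = (if j \<le> length s then \<Sum>i\<le>j. c i * real (scale_seq s j) else 0)"
    by (auto simp: sum.If_cases Int_def intro!: sum.cong)
  finally show "(\<Sum>i\<le>length s. c i * lift (length s) (Ps_vertex s i) j)
      = real (scale_seq s j) * (if j \<le> length s then \<Sum>i\<le>j. c i else 0)"
    by (simp add: sum_distrib_right mult.commute)
qed

lemma sum_chain_increments: "(\<Sum>i\<le>j. C i - chain_prev i C) = C j"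
  by (induction j) (auto simp: chain_prev_def)

lemma box_chains_scale_seq_iff:
  "C \<in> box_chains (scale_seq s) (Suc (length s)) \<longleftrightarrow>
     (\<forall>j\<le>length s. real (scale_seq s j) * C j \<in> \<int> \<and> 0 < C j - chain_prev j C \<and> C j - chain_prev j C < 1)
     \<and> (\<forall>j>length s. C j = 0)"
  by (auto simp: box_chains_def less_Suc_eq_le mult.commute)

lemma open_parallelepiped_Ps_vertex_lattice_pts:
  "open_parallelepiped (length s) (length s) (Ps_vertex s) \<inter> lattice_pts (length s)
     = (\<lambda>C j. real (scale_seq s j) * C j) ` box_chains (scale_seq s) (Suc (length s))"
  (is "?P = ?scale ` ?chains")
proof (intro equalityI subsetI)
  fix y assume "y \<in> ?P"
  then obtain c where c: "\<forall>i\<le>length s. 0 < c i \<and> c i < 1"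
    and y: "y = (\<lambda>j. real (scale_seq s j) * (if j \<le> length s then \<Sum>i\<le>j. c i else 0))"
    and lattice: "\<forall>j\<le>length s. y j \<in> \<int>"
    by (auto simp: open_parallelepiped_def lattice_pts_def parallelepiped_point_Ps_vertex)
  define C where "C j = (if j \<le> length s then \<Sum>i\<le>j. c i else 0)" for j
  have "C j - chain_prev j C = c j" if "j \<le> length s" for j
    using that by (cases j) (simp_all add: C_def chain_prev_def)
  then have "C \<in> ?chains"
    using c lattice by (simp add: box_chains_scale_seq_iff y C_def)
  moreover have "y = ?scale C"
    by (simp add: y C_def)
  ultimately show "y \<in> ?scale ` ?chains"
    by blast
next
  fix y assume "y \<in> ?scale ` ?chains"
  then obtain C where C: "C \<in> ?chains" and y: "y = ?scale C"
    by blast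
  have "y = (\<lambda>j. real (scale_seq s j) * (if j \<le> length s then \<Sum>i\<le>j. C i - chain_prev i C else 0))"
    using C by (auto simp: y sum_chain_increments box_chains_scale_seq_iff)
  then have "y \<in> open_parallelepiped (length s) (length s) (Ps_vertex s)"
    using C unfolding open_parallelepiped_def parallelepiped_point_Ps_vertex
    by (intro CollectI exI[of _ "\<lambda>i. C i - chain_prev i C"]) (auto simp: box_chains_scale_seq_iff)
  moreover have "y \<in> lattice_pts (length s)"
    using C by (simp add: y lattice_pts_def box_chains_scale_seq_iff)
  ultimately show "y \<in> ?P"
    by blast
qed

lemma s_derangement_eq_chain_poly:
  assumes "\<forall>x\<in>set s. 0 < x"
  shows "s_derangement s = chain_poly (scale_seq s) (Suc (length s)) 0"
proof -
  let ?n = "length s"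
  have "inj_on (\<lambda>C j. real (scale_seq s j) * C j) (box_chains (scale_seq s) (Suc ?n))"
    using scale_seq_pos[OF assms] by (intro inj_onI ext) (metis mult_cancel_left of_nat_0_less_iff less_irrefl)
  then have "s_derangement s = (\<Sum>C\<in>box_chains (scale_seq s) (Suc ?n). monom 1 (nat \<lfloor>C ?n\<rfloor>))"
    by (simp add: s_derangement_def ell_star_def open_parallelepiped_Ps_vertex_lattice_pts
        sum.reindex scale_seq_def)
  also have "\<dots> = chain_poly (scale_seq s) (Suc ?n) 0"
    unfolding chain_poly_def chain_prev_Suc
    by (intro sum.cong) (auto simp: box_chains_def scale_seq_def)
  finally show ?thesis .
qed

theorem corollary5p3:
  fixes s :: "nat list"
  assumes "s \<noteq> []" and "\<forall>x\<in>set s. 0 < x"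
  shows "gamma_nonneg (length s + 1) (s_derangement s)"
proof -
  have "gamma_invariant (length s) (chain_poly (scale_seq s) (Suc (length s)))"
    using scale_seq_pos[OF assms(2)] by (intro gamma_invariant_chain_poly) simp
  then show ?thesis
    using s_derangement_eq_chain_poly[OF assms(2)] by (simp add: gamma_invariant_def)
qed

end
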